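(* Let $T$ be a local, translation-invariant stochastic matrix on $\mathbb{Z}\times\{1,\dots,D\}$ such that $T_{j,b;j,b}>1/2$ for all $j$ and $b$. Then all eigenvalues of the Bloch matrix $X(k)$ lie in the open right half of the complex plane for every $k$ (so $\det X(k)\ne0$), and $w(T,0)=0$.
   Context: States are pairs $(j,a)$, $j\in\mathbb{Z}$, $a\in\{1,\dots,D\}$. A stochastic matrix is a real matrix $T=(T_{i,a;j,b})$ with $T_{i,a;j,b}\ge0$ and $\sum_{i,a}T_{i,a;j,b}=1$ for all $(j,b)$. It is local if there are $C,\ell>0$ with $T_{i,a;j,b}\le Ce^{-|i-j|/\ell}$ for all sufficiently large $|i-j|$, and translation invariant if $T_{i+1,a;j+1,b}=T_{i,a;j,b}$. The Bloch matrix is the $D\times D$ matrix $X(k)$ with $X_{a,b}(k)=\sum_{l\in\mathbb{Z}}T_{j+l,a;j,b}e^{-ikl}$, $k\in[-\pi,\pi]$, and $w(T,0)=\int_{-\pi}^{\pi}\frac{dk}{2\pi i}\partial_k\log\det X(k)\in\mathbb{Z}$ when $\det X(k)\neq0$ for all $k$. *)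

theory Defs
  imports "HOL-Analysis.Analysis" "Jordan_Normal_Form.Char_Poly"
begin

text \<open>States (j,a) with j an integer and a in {1..D}. A matrix on this state
space is a function T :: int => nat => int => nat => real, T i a j b being the
entry T_{i,a;j,b}; only entries with a,b in {1..D} are meaningful.\<close>

definition stochastic :: "nat \<Rightarrow> (int \<Rightarrow> nat \<Rightarrow> int \<Rightarrow> nat \<Rightarrow> real) \<Rightarrow> bool" where
  "stochastic D T \<longleftrightarrow>
     (\<forall>i j a b. a \<in> {1..D} \<longrightarrow> b \<in> {1..D} \<longrightarrow> T i a j b \<ge> 0) \<and>
     (\<forall>j b. b \<in> {1..D} \<longrightarrow> ((\<lambda>(i,a). T i a j b) has_sum 1) (UNIV \<times> {1..D}))"

definition local_matrix :: "nat \<Rightarrow> (int \<Rightarrow> nat \<Rightarrow> int \<Rightarrow> nat \<Rightarrow> real) \<Rightarrow> bool" where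
  "local_matrix D T \<longleftrightarrow>
     (\<exists>C L N. C > 0 \<and> L > 0 \<and>
        (\<forall>i j a b. a \<in> {1..D} \<longrightarrow> b \<in> {1..D} \<longrightarrow> \<bar>i - j\<bar> \<ge> N \<longrightarrow>
           T i a j b \<le> C * exp (- real_of_int \<bar>i - j\<bar> / L)))"

definition translation_invariant :: "nat \<Rightarrow> (int \<Rightarrow> nat \<Rightarrow> int \<Rightarrow> nat \<Rightarrow> real) \<Rightarrow> bool" where
  "translation_invariant D T \<longleftrightarrow>
     (\<forall>i j a b. a \<in> {1..D} \<longrightarrow> b \<in> {1..D} \<longrightarrow> T (i+1) a (j+1) b = T i a j b)"

text \<open>Bloch matrix X(k), a D x D complex matrix (Jordan_Normal_Form type mat);
row/column index a-1, b-1 (0-based) corresponds to a, b in {1..D}.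
By translation invariance the sum does not depend on j; we take j = 0.\<close>

definition bloch :: "nat \<Rightarrow> (int \<Rightarrow> nat \<Rightarrow> int \<Rightarrow> nat \<Rightarrow> real) \<Rightarrow> real \<Rightarrow> complex mat" where
  "bloch D T k = Matrix.mat D D (\<lambda>(a,b).
      infsum (\<lambda>l::int. complex_of_real (T (0 + l) (a+1) 0 (b+1)) * exp (- \<i> * complex_of_real (k * real_of_int l))) UNIV)"

text \<open>w(T,0) = \<integral>_{-pi}^{pi} dk/(2 pi i) d/dk log det X(k)
          = (1/(2 pi i)) \<integral>_{-pi}^{pi} (d/dk det X(k)) / det X(k) dk.\<close>

definition winding :: "nat \<Rightarrow> (int \<Rightarrow> nat \<Rightarrow> int \<Rightarrow> nat \<Rightarrow> real) \<Rightarrow> complex" where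
  "winding D T = integral {-pi..pi}
      (\<lambda>k. vector_derivative (\<lambda>t. Determinant.det (bloch D T t)) (at k) / Determinant.det (bloch D T k))
      / (2 * of_real pi * \<i>)"

end

(*
  Since the columns of T sum to 1 and T_{j,b;j,b} > 1/2, every column of X(k) is dominated by the
  real part of its diagonal entry: Re X_bb(k) >= 2 T_bb - s_b > 1 - s_b >= sum_{a /= b} |X_ab(k)|,
  where s_a is the total weight of the entries T_{l,a;0,b}. Such matrices have nonzero determinant
  and no eigenvalue with Re <= 0, and the condition is preserved along the segment from X(k) to the
  identity. This contracts the loop k |-> det X(k) to the constant 1 in C - {0}, so its winding
  number around 0, which is w(T,0), vanishes. Locality lets X extend holomorphically to a strip
  around the real axis, which turns the winding integral into a contour integral.
*)

theory Submission
  imports Defs "HOL-Complex_Analysis.Complex_Analysis"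
begin

section \<open>Diagonally dominant matrices\<close>

lemma det_neq_0_if_col_diag_dominant:
  fixes M :: "complex mat"
  assumes M: "M \<in> carrier_mat n n"
    and dom: "\<And>b. b < n \<Longrightarrow> (\<Sum>a\<in>{0..<n}-{b}. cmod (M $$ (a,b))) < cmod (M $$ (b,b))"
  shows "det M \<noteq> 0"
proof
  assume "det M = 0"
  then obtain w where w: "w \<in> carrier_vec n" "w \<noteq> 0\<^sub>v n" "transpose_mat M *\<^sub>v w = 0\<^sub>v n"
    using det_0_iff_vec_prod_zero[of "transpose_mat M" n] det_transpose[OF M] M by auto
  define m where "m = Max ((\<lambda>a. cmod (w $ a)) ` {0..<n})"
  have n: "{0..<n} \<noteq> {}"
    using w(1,2) by (auto simp: vec_eq_iff)
  have "m \<in> (\<lambda>a. cmod (w $ a)) ` {0..<n}"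
    unfolding m_def using n by (intro Max_in) auto
  then obtain b where b: "b < n" "cmod (w $ b) = m"
    by auto
  have le_m: "cmod (w $ a) \<le> m" if "a < n" for a
    unfolding m_def using that by (intro Max_ge) auto
  have "m > 0"
  proof (rule ccontr)
    assume "\<not> m > 0"
    hence "w $ a = 0" if "a < n" for a
      using le_m[OF that] by (metis norm_le_zero_iff not_less order.trans)
    hence "w = 0\<^sub>v n"
      using w(1) by (intro eq_vecI) auto
    with w(2) show False ..
  qed
  have "(transpose_mat M *\<^sub>v w) $ b = 0"
    using w(3) b(1) by simp
  hence "(\<Sum>a\<in>{0..<n}. M $$ (a,b) * w $ a) = 0"
    using M w(1) b(1) by (simp add: scalar_prod_def)
  hence "M $$ (b,b) * w $ b = - (\<Sum>a\<in>{0..<n}-{b}. M $$ (a,b) * w $ a)"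
    using b(1) by (subst (asm) sum.remove[of _ b]) (auto simp: eq_neg_iff_add_eq_0)
  hence "cmod (M $$ (b,b)) * m = cmod (\<Sum>a\<in>{0..<n}-{b}. M $$ (a,b) * w $ a)"
    using b(2) by (metis norm_minus_cancel norm_mult)
  also have "\<dots> \<le> (\<Sum>a\<in>{0..<n}-{b}. cmod (M $$ (a,b)) * m)"
    by (rule order_trans[OF norm_sum sum_mono]) (auto simp: norm_mult intro: mult_left_mono le_m)
  also have "\<dots> < cmod (M $$ (b,b)) * m"
    using dom[OF b(1)] \<open>m > 0\<close> by (simp add: sum_distrib_right[symmetric])
  finally show False by simp
qed

text \<open>Measuring the diagonal by its real part makes the condition convex and stable under
  subtracting e \<cdot> 1 with Re e \<le> 0.\<close>

definition Re_col_diag_dominant :: "complex mat \<Rightarrow> bool" where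
  "Re_col_diag_dominant M \<longleftrightarrow>
     (\<forall>b < dim_col M. (\<Sum>a\<in>{0..<dim_row M}-{b}. cmod (M $$ (a,b))) < Re (M $$ (b,b)))"

lemma det_neq_0_if_Re_col_diag_dominant:
  assumes M: "M \<in> carrier_mat n n" and "Re_col_diag_dominant M"
  shows "det M \<noteq> 0"
proof (rule det_neq_0_if_col_diag_dominant[OF M])
  fix b assume "b < n"
  with assms have "(\<Sum>a\<in>{0..<n}-{b}. cmod (M $$ (a,b))) < Re (M $$ (b,b))"
    by (auto simp: Re_col_diag_dominant_def)
  also have "\<dots> \<le> cmod (M $$ (b,b))"
    by (rule complex_Re_le_cmod)
  finally show "(\<Sum>a\<in>{0..<n}-{b}. cmod (M $$ (a,b))) < cmod (M $$ (b,b))" .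
qed

lemma Re_col_diag_dominant_one: "Re_col_diag_dominant (1\<^sub>m n)"
  by (simp add: Re_col_diag_dominant_def)

lemma Re_col_diag_dominant_convex:
  assumes A: "A \<in> carrier_mat n n" and B: "B \<in> carrier_mat n n"
    and domA: "Re_col_diag_dominant A" and domB: "Re_col_diag_dominant B"
    and t: "t \<in> {0..1}"
  shows "Re_col_diag_dominant (of_real (1 - t) \<cdot>\<^sub>m A + of_real t \<cdot>\<^sub>m B)"
  unfolding Re_col_diag_dominant_def
proof (intro allI impI)
  let ?C = "of_real (1 - t) \<cdot>\<^sub>m A + of_real t \<cdot>\<^sub>m B"
  fix b assume "b < dim_col ?C"
  hence b: "b < n" using A B by simp
  have entry: "?C $$ (a,b) = of_real (1 - t) * A $$ (a,b) + of_real t * B $$ (a,b)" if "a < n" for a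
    using that b A B by simp
  have "dim_row ?C = n"
    using A B by simp
  hence "(\<Sum>a\<in>{0..<dim_row ?C}-{b}. cmod (?C $$ (a,b)))
      \<le> (\<Sum>a\<in>{0..<n}-{b}. (1 - t) * cmod (A $$ (a,b)) + t * cmod (B $$ (a,b)))"
  proof (simp only:, intro sum_mono)
    fix a assume "a \<in> {0..<n}-{b}"
    hence a: "a < n" by simp
    have "cmod (?C $$ (a,b)) \<le> cmod (of_real (1 - t) * A $$ (a,b)) + cmod (of_real t * B $$ (a,b))"
      unfolding entry[OF a] by (rule norm_triangle_ineq)
    also have "\<dots> = (1 - t) * cmod (A $$ (a,b)) + t * cmod (B $$ (a,b))"
      using t by (simp only: norm_mult norm_of_real) simp
    finally show "cmod (?C $$ (a,b)) \<le> (1 - t) * cmod (A $$ (a,b)) + t * cmod (B $$ (a,b))" .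
  qed
  also have "\<dots> = (1 - t) * (\<Sum>a\<in>{0..<n}-{b}. cmod (A $$ (a,b))) + t * (\<Sum>a\<in>{0..<n}-{b}. cmod (B $$ (a,b)))"
    by (simp add: sum.distrib sum_distrib_left)
  also have "\<dots> < (1 - t) * Re (A $$ (b,b)) + t * Re (B $$ (b,b))"
  proof -
    have sA: "(\<Sum>a\<in>{0..<n}-{b}. cmod (A $$ (a,b))) < Re (A $$ (b,b))"
      and sB: "(\<Sum>a\<in>{0..<n}-{b}. cmod (B $$ (a,b))) < Re (B $$ (b,b))"
      using domA domB A B b by (auto simp: Re_col_diag_dominant_def)
    show ?thesis
    proof (cases "t = 1")
      case True
      with sB show ?thesis by simp
    next
      case False
      with t sA sB show ?thesis
        by (intro add_less_le_mono mult_strict_left_mono mult_left_mono) auto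
    qed
  qed
  also have "\<dots> = Re (?C $$ (b,b))"
    by (simp only: entry[OF b]) simp
  finally show "(\<Sum>a\<in>{0..<dim_row ?C}-{b}. cmod (?C $$ (a,b))) < Re (?C $$ (b,b))" .
qed

lemma eigenvalue_Re_pos_if_Re_col_diag_dominant:
  assumes M: "M \<in> carrier_mat n n" and dom: "Re_col_diag_dominant M" and "eigenvalue M e"
  shows "Re e > 0"
proof (rule ccontr)
  assume e: "\<not> Re e > 0"
  have entry: "char_matrix M e $$ (a,b) = M $$ (a,b) - (if a = b then e else 0)" if "a < n" "b < n" for a b
    using M that by (simp add: char_matrix_def)
  have "Re_col_diag_dominant (char_matrix M e)"
    unfolding Re_col_diag_dominant_def
  proof (intro allI impI)
    fix b assume "b < dim_col (char_matrix M e)"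
    hence b: "b < n" using char_matrix_closed[OF M, of e] by auto
    have "(\<Sum>a\<in>{0..<dim_row (char_matrix M e)}-{b}. cmod (char_matrix M e $$ (a,b)))
        = (\<Sum>a\<in>{0..<n}-{b}. cmod (M $$ (a,b)))"
      using char_matrix_closed[OF M, of e] b by (intro sum.cong) (auto simp: entry)
    also have "\<dots> < Re (M $$ (b,b))"
      using dom M b by (simp add: Re_col_diag_dominant_def)
    also have "\<dots> \<le> Re (char_matrix M e $$ (b,b))"
      using e b by (simp add: entry)
    finally show "(\<Sum>a\<in>{0..<dim_row (char_matrix M e)}-{b}. cmod (char_matrix M e $$ (a,b)))
        < Re (char_matrix M e $$ (b,b))" .
  qed
  hence "det (char_matrix M e) \<noteq> 0"
    by (rule det_neq_0_if_Re_col_diag_dominant[OF char_matrix_closed[OF M]])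
  with assms(3) show False
    using eigenvalue_det[OF M] by simp
qed

section \<open>Determinant loops and winding numbers\<close>

lemma continuous_on_det:
  fixes A :: "'a::topological_space \<Rightarrow> 'b::real_normed_field mat"
  assumes "\<And>x. x \<in> S \<Longrightarrow> A x \<in> carrier_mat n n"
    and "\<And>a b. a < n \<Longrightarrow> b < n \<Longrightarrow> continuous_on S (\<lambda>x. A x $$ (a,b))"
  shows "continuous_on S (\<lambda>x. det (A x))"
proof (rule continuous_on_eq)
  show "continuous_on S (\<lambda>x. \<Sum>p\<in>{p. p permutes {0..<n}}. signof p * (\<Prod>i=0..<n. A x $$ (i, p i)))"
    using assms(2) by (intro continuous_intros) (auto simp: permutes_in_image)
  show "(\<Sum>p\<in>{p. p permutes {0..<n}}. signof p * (\<Prod>i=0..<n. A x $$ (i, p i))) = det (A x)"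
    if "x \<in> S" for x
    using det_def'[OF assms(1)[OF that]] by simp
qed

lemma holomorphic_on_det:
  fixes A :: "complex \<Rightarrow> complex mat"
  assumes "\<And>z. z \<in> S \<Longrightarrow> A z \<in> carrier_mat n n"
    and "\<And>a b. a < n \<Longrightarrow> b < n \<Longrightarrow> (\<lambda>z. A z $$ (a,b)) holomorphic_on S"
  shows "(\<lambda>z. det (A z)) holomorphic_on S"
proof (rule holomorphic_transform)
  show "(\<lambda>z. \<Sum>p\<in>{p. p permutes {0..<n}}. signof p * (\<Prod>i=0..<n. A z $$ (i, p i))) holomorphic_on S"
    using assms(2) by (intro holomorphic_intros) (auto simp: permutes_in_image)
  show "(\<Sum>p\<in>{p. p permutes {0..<n}}. signof p * (\<Prod>i=0..<n. A z $$ (i, p i))) = det (A z)"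
    if "z \<in> S" for z
    using det_def'[OF assms(1)[OF that]] by simp
qed

lemma winding_number_det_Re_col_diag_dominant_loop:
  fixes A :: "real \<Rightarrow> complex mat"
  assumes carrier: "\<And>s. s \<in> {0..1} \<Longrightarrow> A s \<in> carrier_mat n n"
    and cont: "\<And>a b. a < n \<Longrightarrow> b < n \<Longrightarrow> continuous_on {0..1} (\<lambda>s. A s $$ (a,b))"
    and dom: "\<And>s. s \<in> {0..1} \<Longrightarrow> Re_col_diag_dominant (A s)"
    and loop: "A 0 = A 1"
  shows "winding_number (\<lambda>s. det (A s)) 0 = 0"
proof -
  define B where "B p = of_real (1 - fst p) \<cdot>\<^sub>m A (snd p) + of_real (fst p) \<cdot>\<^sub>m 1\<^sub>m n" for p
  have dims: "dim_row (A s) = n" "dim_col (A s) = n" if "s \<in> {0..1}" for s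
    using carrier[OF that] by auto
  have B_carrier: "B p \<in> carrier_mat n n" if "p \<in> {0..1} \<times> {0..1}" for p
    using carrier that by (auto simp: B_def)
  have "homotopic_loops (- {0}) (\<lambda>s. det (A s)) (\<lambda>s. 1)"
    unfolding homotopic_loops
  proof (intro exI[of _ "\<lambda>p. det (B p)"] conjI ballI)
    show "continuous_on ({0..1} \<times> {0..1}) (\<lambda>p. det (B p))"
    proof (rule continuous_on_det[OF B_carrier])
      fix a b assume ab: "a < n" "b < n"
      have "continuous_on ({0..1} \<times> {0..1}) (\<lambda>p. A (snd p) $$ (a,b))"
        by (rule continuous_on_compose2[OF cont[OF ab] continuous_on_snd]) auto
      hence "continuous_on ({0..1} \<times> {0..1})
          (\<lambda>p. of_real (1 - fst p) * A (snd p) $$ (a,b) + of_real (fst p) * (if a = b then 1 else 0))"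
        by (intro continuous_intros)
      thus "continuous_on ({0..1} \<times> {0..1}) (\<lambda>p. B p $$ (a,b))"
        by (rule continuous_on_eq) (use ab in \<open>auto simp: B_def dims\<close>)
    qed
    show "(\<lambda>p. det (B p)) \<in> {0..1} \<times> {0..1} \<rightarrow> - {0}"
      using det_neq_0_if_Re_col_diag_dominant[OF B_carrier]
        Re_col_diag_dominant_convex[OF carrier one_carrier_mat dom Re_col_diag_dominant_one]
      by (auto simp: B_def)
    show "det (B (0, s)) = det (A s)" if "s \<in> {0..1}" for s
    proof -
      have "B (0, s) = A s"
        using carrier[OF that] by (intro eq_matI) (auto simp: B_def)
      thus ?thesis by simp
    qed
    show "det (B (1, s)) = 1" if "s \<in> {0..1}" for s
    proof -
      have "B (1, s) = 1\<^sub>m n"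
        using carrier[OF that] by (intro eq_matI) (auto simp: B_def)
      thus ?thesis by simp
    qed
    show "pathfinish ((\<lambda>p. det (B p)) \<circ> Pair t) = pathstart ((\<lambda>p. det (B p)) \<circ> Pair t)" for t
      by (simp add: pathfinish_def pathstart_def B_def loop)
  qed
  thus ?thesis
    using winding_number_homotopic_loops winding_number_zero_const by fastforce
qed

lemma vector_derivative_holomorphic_of_real:
  assumes "F holomorphic_on S" "open S" "of_real k \<in> S"
  shows "vector_derivative (\<lambda>t. F (of_real t)) (at k) = deriv F (of_real k)"
  by (rule vector_derivative_at has_vector_derivative_real_field holomorphic_derivI assms)+

lemma integral_logderiv_eq_winding_number:
  fixes F :: "complex \<Rightarrow> complex"
  assumes S: "open S" "F holomorphic_on S" "of_real ` {a..b} \<subseteq> S"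
    and nonzero: "\<And>k. k \<in> {a..b} \<Longrightarrow> F (of_real k) \<noteq> 0"
    and "a < b"
  shows "integral {a..b} (\<lambda>k. deriv F (of_real k) / F (of_real k))
       = 2 * of_real pi * \<i> * winding_number (F \<circ> linepath (of_real a) (of_real b)) 0"
proof -
  let ?\<gamma> = "linepath (of_real a) (of_real b) :: real \<Rightarrow> complex"
  have "?\<gamma> = of_real \<circ> linepath a b"
    by (simp add: fun_eq_iff of_real_linepath)
  hence image: "path_image ?\<gamma> = of_real ` {a..b}"
    using \<open>a < b\<close> by (simp add: path_image_compose closed_segment_eq_real_ivl)
  have valid: "valid_path (F \<circ> ?\<gamma>)"
    using image S(3) by (intro valid_path_compose_holomorphic[OF valid_path_linepath S(2,1)]) auto
  have "0 \<notin> path_image (F \<circ> ?\<gamma>)"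
    using image nonzero by (auto simp: path_image_compose)
  hence "2 * of_real pi * \<i> * winding_number (F \<circ> ?\<gamma>) 0 = contour_integral (F \<circ> ?\<gamma>) (\<lambda>w. 1 / w)"
    using winding_number_valid_path[OF valid] by simp
  also have "\<dots> = contour_integral ?\<gamma> (\<lambda>w. deriv F w * (1 / F w))"
    using image S by (intro contour_integral_comp_analyticW[of F S]) (auto simp: analytic_on_open)
  also have "\<dots> = integral {a..b} (\<lambda>k. deriv F (of_real k) / F (of_real k))"
    using \<open>a < b\<close> by (subst contour_integral_linepath_Reals_eq) auto
  finally show ?thesis ..
qed

section \<open>Fourier series with exponentially decaying coefficients\<close>

lemma holomorphic_on_infsum:
  fixes f :: "'a \<Rightarrow> complex \<Rightarrow> complex"
  assumes S: "open S" and holo: "\<And>x. x \<in> X \<Longrightarrow> f x holomorphic_on S"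
    and bound: "\<And>z. z \<in> S \<Longrightarrow> \<exists>r>0. \<exists>M. cball z r \<subseteq> S \<and> M summable_on X \<and>
                   (\<forall>x\<in>X. \<forall>w\<in>cball z r. norm (f x w) \<le> M x)"
  shows "(\<lambda>z. \<Sum>\<^sub>\<infinity>x\<in>X. f x z) holomorphic_on S"
proof -
  have "(\<lambda>z. \<Sum>\<^sub>\<infinity>x\<in>X. f x z) field_differentiable at z" if z: "z \<in> S" for z
  proof -
    obtain r M where r: "r > 0" "cball z r \<subseteq> S" "M summable_on X"
      and M: "\<And>x w. x \<in> X \<Longrightarrow> w \<in> cball z r \<Longrightarrow> norm (f x w) \<le> M x"
      using bound[OF z] by blast
    have lim: "uniform_limit (cball z r) (\<lambda>Y w. \<Sum>x\<in>Y. f x w) (\<lambda>w. \<Sum>\<^sub>\<infinity>x\<in>X. f x w)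
            (finite_subsets_at_top X)"
      using M r(3) by (rule Weierstrass_m_test_general)
    have partial: "\<forall>\<^sub>F Y in finite_subsets_at_top X.
        continuous_on (cball z r) (\<lambda>w. \<Sum>x\<in>Y. f x w) \<and> (\<lambda>w. \<Sum>x\<in>Y. f x w) holomorphic_on ball z r"
    proof (rule eventually_finite_subsets_at_top_weakI)
      fix Y assume "finite Y" "Y \<subseteq> X"
      hence "(\<lambda>w. \<Sum>x\<in>Y. f x w) holomorphic_on cball z r"
        using holo r(2) by (auto intro!: holomorphic_intros intro: holomorphic_on_subset)
      thus "continuous_on (cball z r) (\<lambda>w. \<Sum>x\<in>Y. f x w) \<and> (\<lambda>w. \<Sum>x\<in>Y. f x w) holomorphic_on ball z r"
        by (auto intro: holomorphic_on_imp_continuous_on holomorphic_on_subset)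
    qed
    obtain "(\<lambda>w. \<Sum>\<^sub>\<infinity>x\<in>X. f x w) holomorphic_on ball z r"
      by (rule holomorphic_uniform_limit[OF partial lim]) simp
    thus ?thesis
      using r(1) by (intro holomorphic_on_imp_differentiable_at[of _ "ball z r"]) auto
  qed
  thus ?thesis
    by (simp add: holomorphic_on_def field_differentiable_at_within)
qed

lemma summable_on_exp_neg_abs_int:
  fixes a :: real
  assumes "a > 0"
  shows "(\<lambda>l::int. exp (- a * \<bar>of_int l\<bar>)) summable_on UNIV"
proof -
  have "summable (\<lambda>n::nat. exp (- a) ^ n)"
    by (rule summable_geometric) (use assms in simp)
  hence geom: "(\<lambda>n::nat. exp (- a * real n)) summable_on UNIV"
    by (simp add: summable_on_UNIV_nonneg_real_iff exp_of_nat_mult[symmetric] mult.commute)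
  have "(\<lambda>l::int. exp (- a * \<bar>of_int l\<bar>)) summable_on range int"
    using geom by (subst summable_on_reindex) (auto simp: o_def)
  moreover have "(\<lambda>l::int. exp (- a * \<bar>of_int l\<bar>)) summable_on range (\<lambda>n. - int n)"
    using geom by (subst summable_on_reindex) (auto simp: o_def inj_on_def)
  moreover have "range int \<union> range (\<lambda>n. - int n) = UNIV"
    by (auto intro: int_cases2)
  ultimately show ?thesis
    by (metis summable_on_union)
qed

definition fourier_series :: "(int \<Rightarrow> real) \<Rightarrow> complex \<Rightarrow> complex" where
  "fourier_series c z = (\<Sum>\<^sub>\<infinity>l. of_real (c l) * exp (- \<i> * z * of_int l))"

lemma norm_fourier_term:
  "c l \<ge> 0 \<Longrightarrow> norm (of_real (c l) * exp (- \<i> * z * of_int l)) = c l * exp (Im z * of_int l)"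
  by (simp add: norm_mult norm_exp_eq_Re)

lemma summable_on_exp_weighted_coeffs:
  fixes c :: "int \<Rightarrow> real"
  assumes nn: "\<And>l. c l \<ge> 0" and L: "L > 0" and \<delta>: "\<delta> < 1 / L"
    and decay: "\<And>l. \<bar>l\<bar> \<ge> N \<Longrightarrow> c l \<le> C * exp (- real_of_int \<bar>l\<bar> / L)"
  shows "(\<lambda>l. c l * exp (\<delta> * \<bar>of_int l\<bar>)) summable_on UNIV"
proof -
  have "(\<lambda>l. C * exp (- (1 / L - \<delta>) * \<bar>of_int l\<bar>)) summable_on UNIV"
    using \<delta> by (intro summable_on_cmult_right summable_on_exp_neg_abs_int) simp
  hence "(\<lambda>l. c l * exp (\<delta> * \<bar>of_int l\<bar>)) summable_on {l. \<bar>l\<bar> \<ge> N}"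
  proof (rule summable_on_comparison_test[OF summable_on_subset], goal_cases)
    case (2 l)
    hence "c l * exp (\<delta> * \<bar>of_int l\<bar>) \<le> C * exp (- real_of_int \<bar>l\<bar> / L) * exp (\<delta> * \<bar>of_int l\<bar>)"
      using decay by (intro mult_right_mono) auto
    also have "\<dots> = C * exp (- real_of_int \<bar>l\<bar> / L + \<delta> * \<bar>of_int l\<bar>)"
      by (simp only: mult.assoc exp_add)
    also have "- real_of_int \<bar>l\<bar> / L + \<delta> * \<bar>of_int l\<bar> = - (1 / L - \<delta>) * \<bar>of_int l\<bar>"
      by (simp add: algebra_simps)
    finally show ?case .
  qed (use nn in auto)
  moreover have "(\<lambda>l. c l * exp (\<delta> * \<bar>of_int l\<bar>)) summable_on {l. \<bar>l\<bar> < N}"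
    by (rule summable_on_finite, rule finite_subset[of _ "{-N..N}"]) auto
  moreover have "{l. \<bar>l\<bar> \<ge> N} \<union> {l. \<bar>l\<bar> < N} = UNIV"
    by auto
  ultimately show ?thesis
    by (metis summable_on_union)
qed

lemma holomorphic_on_fourier_series:
  assumes nn: "\<And>l. c l \<ge> 0" and L: "L > 0"
    and decay: "\<And>l. \<bar>l\<bar> \<ge> N \<Longrightarrow> c l \<le> C * exp (- real_of_int \<bar>l\<bar> / L)"
  shows "fourier_series c holomorphic_on {z. \<bar>Im z\<bar> < 1 / L}"
  unfolding fourier_series_def[abs_def]
proof (rule holomorphic_on_infsum)
  show "open {z. \<bar>Im z\<bar> < 1 / L}"
    by (intro open_Collect_less continuous_intros)
  show "(\<lambda>z. of_real (c l) * exp (- \<i> * z * of_int l)) holomorphic_on {z. \<bar>Im z\<bar> < 1 / L}" for l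
    by (intro holomorphic_intros)
  fix z assume "z \<in> {z. \<bar>Im z\<bar> < 1 / L}"
  define r where "r = (1 / L - \<bar>Im z\<bar>) / 2"
  have r: "r > 0" "\<bar>Im z\<bar> + r < 1 / L"
    using \<open>z \<in> _\<close> by (auto simp: r_def field_simps)
  have Im_le: "\<bar>Im w\<bar> \<le> \<bar>Im z\<bar> + r" if "w \<in> cball z r" for w
    using that abs_Im_le_cmod[of "z - w"] by (auto simp: dist_norm)
  have "norm (of_real (c l) * exp (- \<i> * w * of_int l)) \<le> c l * exp ((\<bar>Im z\<bar> + r) * \<bar>of_int l\<bar>)"
    if "w \<in> cball z r" for w l
  proof -
    have "Im w * of_int l \<le> \<bar>Im w\<bar> * \<bar>of_int l\<bar>"
      by (metis abs_ge_self abs_mult)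
    also have "\<dots> \<le> (\<bar>Im z\<bar> + r) * \<bar>of_int l\<bar>"
      using Im_le[OF that] by (rule mult_right_mono) simp
    finally have "Im w * of_int l \<le> (\<bar>Im z\<bar> + r) * \<bar>of_int l\<bar>" .
    hence "c l * exp (Im w * of_int l) \<le> c l * exp ((\<bar>Im z\<bar> + r) * \<bar>of_int l\<bar>)"
      using nn[of l] by (intro mult_left_mono) auto
    thus ?thesis
      using norm_fourier_term[of c l w, OF nn] by simp
  qed
  moreover have "cball z r \<subseteq> {z. \<bar>Im z\<bar> < 1 / L}"
    using Im_le r(2) by force
  moreover have "(\<lambda>l. c l * exp ((\<bar>Im z\<bar> + r) * \<bar>of_int l\<bar>)) summable_on UNIV"
    using nn L r(2) decay by (rule summable_on_exp_weighted_coeffs)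
  ultimately show "\<exists>r>0. \<exists>M. cball z r \<subseteq> {z. \<bar>Im z\<bar> < 1 / L} \<and> M summable_on UNIV \<and>
      (\<forall>l\<in>UNIV. \<forall>w\<in>cball z r. norm (of_real (c l) * exp (- \<i> * w * of_int l)) \<le> M l)"
    using r(1) by blast
qed

lemma
  assumes nn: "\<And>l. c l \<ge> 0" and s: "(c has_sum s) UNIV"
  shows norm_fourier_series_of_real_le: "norm (fourier_series c (of_real k)) \<le> s"
    and Re_fourier_series_of_real_ge: "Re (fourier_series c (of_real k)) \<ge> 2 * c 0 - s"
proof -
  define t where "t l = of_real (c l) * exp (- \<i> * of_real k * of_int l)" for l
  have norm_t: "norm (t l) = c l" for l
    unfolding t_def by (subst norm_fourier_term[OF nn]) simp
  have norm_summable: "(\<lambda>l. norm (t l)) summable_on UNIV"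
    using has_sum_imp_summable[OF s] by (simp add: norm_t)
  hence "t summable_on UNIV"
    by (rule abs_summable_summable)
  hence t: "(t has_sum fourier_series c (of_real k)) UNIV"
    unfolding fourier_series_def t_def[symmetric] by (rule has_sum_infsum)
  show "norm (fourier_series c (of_real k)) \<le> s"
    using norm_infsum_bound[OF norm_summable] by (simp add: infsumI[OF t] infsumI[OF s] norm_t)
  have "((\<lambda>l. - c l + (if l = 0 then 2 * c 0 else 0)) has_sum (- s + 2 * c 0)) UNIV"
    by (intro has_sum_add has_sum_uminusI[OF s] has_sum_finite_neutralI[of "{0}"]) auto
  moreover have "- c l + (if l = 0 then 2 * c 0 else 0) \<le> Re (t l)" for l
  proof (cases "l = 0")
    case True
    thus ?thesis by (simp add: t_def)
  next
    case False
    thus ?thesis using abs_Re_le_cmod[of "t l"] norm_t[of l] by simp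
  qed
  ultimately have "- s + 2 * c 0 \<le> Re (fourier_series c (of_real k))"
    by (rule has_sum_mono[OF _ has_sum_Re[OF t]])
  thus "Re (fourier_series c (of_real k)) \<ge> 2 * c 0 - s"
    by simp
qed

lemma fourier_series_periodic: "fourier_series c (z + 2 * of_real pi) = fourier_series c z"
proof -
  have "exp (- \<i> * (z + 2 * of_real pi) * of_int l) = exp (- \<i> * z * of_int l)" for l
    by (subst exp_eq) (rule exI[of _ "- l"], simp add: algebra_simps)
  thus ?thesis
    by (simp add: fourier_series_def)
qed

lemma has_sum_product_columns:
  fixes f :: "'i \<Rightarrow> 'a \<Rightarrow> real"
  assumes sum: "((\<lambda>(i,a). f i a) has_sum s) (I \<times> A)" and "finite A"
  shows "\<And>a. a \<in> A \<Longrightarrow> (\<lambda>i. f i a) summable_on I"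
    and "(\<Sum>a\<in>A. \<Sum>\<^sub>\<infinity>i\<in>I. f i a) = s"
proof -
  have swapped: "((\<lambda>(a,i). f i a) has_sum s) (A \<times> I)"
    using sum has_sum_swap[of "\<lambda>(i,a). f i a"] by simp
  show column: "(\<lambda>i. f i a) summable_on I" if "a \<in> A" for a
    using summable_on_SigmaD1[of "\<lambda>a i. f i a" A "\<lambda>_. I", OF has_sum_imp_summable[OF swapped] that]
    by simp
  have "((\<lambda>a. \<Sum>\<^sub>\<infinity>i\<in>I. f i a) has_sum s) A"
    using swapped by (rule has_sum_SigmaD) (use column in auto)
  thus "(\<Sum>a\<in>A. \<Sum>\<^sub>\<infinity>i\<in>I. f i a) = s"
    using has_sum_finite[OF \<open>finite A\<close>] has_sum_unique by blast
qed

section \<open>The Bloch matrix\<close>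

definition bloch_coeff :: "(int \<Rightarrow> nat \<Rightarrow> int \<Rightarrow> nat \<Rightarrow> real) \<Rightarrow> nat \<Rightarrow> nat \<Rightarrow> int \<Rightarrow> real" where
  "bloch_coeff T a b l = T l (Suc a) 0 (Suc b)"

definition bloch_ext :: "nat \<Rightarrow> (int \<Rightarrow> nat \<Rightarrow> int \<Rightarrow> nat \<Rightarrow> real) \<Rightarrow> complex \<Rightarrow> complex mat" where
  "bloch_ext D T z = Matrix.mat D D (\<lambda>(a,b). fourier_series (bloch_coeff T a b) z)"

lemma bloch_eq_bloch_ext: "bloch D T k = bloch_ext D T (of_real k)"
  unfolding bloch_def bloch_ext_def fourier_series_def bloch_coeff_def by (simp add: mult.assoc)

lemma dim_bloch_ext [simp]: "dim_row (bloch_ext D T z) = D" "dim_col (bloch_ext D T z) = D"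
  by (simp_all add: bloch_ext_def)

lemma bloch_ext_carrier: "bloch_ext D T z \<in> carrier_mat D D"
  by (simp add: carrier_matI)

lemma index_bloch_ext [simp]:
  "a < D \<Longrightarrow> b < D \<Longrightarrow> bloch_ext D T z $$ (a,b) = fourier_series (bloch_coeff T a b) z"
  by (simp add: bloch_ext_def)

lemma bloch_ext_periodic: "bloch_ext D T (z + 2 * of_real pi) = bloch_ext D T z"
  by (simp add: bloch_ext_def fourier_series_periodic)

lemma bloch_coeff_nonneg:
  "stochastic D T \<Longrightarrow> a < D \<Longrightarrow> b < D \<Longrightarrow> bloch_coeff T a b l \<ge> 0"
  by (simp add: stochastic_def bloch_coeff_def)

lemma bloch_coeff_column_sums:
  assumes "stochastic D T" "b < D"
  shows "\<And>a. a < D \<Longrightarrow> (bloch_coeff T a b has_sum (\<Sum>\<^sub>\<infinity>l. bloch_coeff T a b l)) UNIV"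
    and "(\<Sum>a<D. \<Sum>\<^sub>\<infinity>l. bloch_coeff T a b l) = 1"
proof -
  have sum: "((\<lambda>(i,a). T i a 0 (Suc b)) has_sum 1) (UNIV \<times> {1..D})"
    using assms by (simp add: stochastic_def)
  note columns = has_sum_product_columns[OF sum finite_atLeastAtMost]
  show "(bloch_coeff T a b has_sum (\<Sum>\<^sub>\<infinity>l. bloch_coeff T a b l)) UNIV" if "a < D" for a
    using columns(1)[of "Suc a"] that by (simp add: bloch_coeff_def[abs_def])
  show "(\<Sum>a<D. \<Sum>\<^sub>\<infinity>l. bloch_coeff T a b l) = 1"
    using columns(2) by (simp add: bloch_coeff_def sum.atLeast1_atMost_eq)
qed

lemma Re_col_diag_dominant_bloch_ext:
  assumes stoch: "stochastic D T" and diag: "\<And>j b. b \<in> {1..D} \<Longrightarrow> T j b j b > 1/2"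
  shows "Re_col_diag_dominant (bloch_ext D T (of_real k))"
  unfolding Re_col_diag_dominant_def
proof (intro allI impI)
  let ?X = "bloch_ext D T (of_real k)"
  fix b assume "b < dim_col ?X"
  hence b: "b < D" by simp
  define s where "s a = (\<Sum>\<^sub>\<infinity>l. bloch_coeff T a b l)" for a
  have nn: "\<And>a l. a < D \<Longrightarrow> bloch_coeff T a b l \<ge> 0"
    using bloch_coeff_nonneg[OF stoch _ b] by blast
  have s: "(bloch_coeff T a b has_sum s a) UNIV" if "a < D" for a
    using bloch_coeff_column_sums(1)[OF stoch b that] by (simp add: s_def)
  have "(\<Sum>a\<in>{0..<dim_row ?X}-{b}. cmod (?X $$ (a,b))) \<le> (\<Sum>a\<in>{0..<D}-{b}. s a)"
    unfolding dim_bloch_ext using b by (intro sum_mono) (auto intro: norm_fourier_series_of_real_le nn s)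
  also have "\<dots> = 1 - s b"
    using bloch_coeff_column_sums(2)[OF stoch b] b by (simp add: sum_diff1 s_def lessThan_atLeast0)
  also have "\<dots> < 2 * bloch_coeff T b b 0 - s b"
    using diag[of "Suc b" 0] b by (simp add: bloch_coeff_def)
  also have "\<dots> \<le> Re (?X $$ (b,b))"
    using b by (auto intro: Re_fourier_series_of_real_ge nn s)
  finally show "(\<Sum>a\<in>{0..<dim_row ?X}-{b}. cmod (?X $$ (a,b))) < Re (?X $$ (b,b))" .
qed

lemma holomorphic_bloch_ext:
  assumes stoch: "stochastic D T" and "local_matrix D T"
  obtains S where "open S" "\<real> \<subseteq> S"
    and "\<And>a b. a < D \<Longrightarrow> b < D \<Longrightarrow> (\<lambda>z. bloch_ext D T z $$ (a,b)) holomorphic_on S"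
proof -
  obtain C L N where L: "L > 0" and decay: "\<And>i j a b. a \<in> {1..D} \<Longrightarrow> b \<in> {1..D} \<Longrightarrow> \<bar>i - j\<bar> \<ge> N \<Longrightarrow>
      T i a j b \<le> C * exp (- real_of_int \<bar>i - j\<bar> / L)"
    using assms(2) unfolding local_matrix_def by blast
  show ?thesis
  proof (rule that)
    show "open {z. \<bar>Im z\<bar> < 1 / L}"
      by (intro open_Collect_less continuous_intros)
    show "\<real> \<subseteq> {z. \<bar>Im z\<bar> < 1 / L}"
      using L by (auto elim: Reals_cases)
    fix a b assume ab: "a < D" "b < D"
    have "fourier_series (bloch_coeff T a b) holomorphic_on {z. \<bar>Im z\<bar> < 1 / L}"
      using bloch_coeff_nonneg[OF stoch ab] L decay[of "Suc a" "Suc b" _ 0] ab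
      by (intro holomorphic_on_fourier_series[where N = N and C = C]) (auto simp: bloch_coeff_def)
    thus "(\<lambda>z. bloch_ext D T z $$ (a,b)) holomorphic_on {z. \<bar>Im z\<bar> < 1 / L}"
      using ab by simp
  qed
qed

lemma winding_eq_winding_number_det_bloch_ext:
  assumes "stochastic D T" "local_matrix D T"
    and nonzero: "\<And>k. k \<in> {-pi..pi} \<Longrightarrow> det (bloch D T k) \<noteq> 0"
  shows "winding D T = winding_number ((\<lambda>z. det (bloch_ext D T z)) \<circ> linepath (of_real (- pi)) (of_real pi)) 0"
proof -
  obtain S where S: "open S" "\<real> \<subseteq> S"
    and entries: "\<And>a b. a < D \<Longrightarrow> b < D \<Longrightarrow> (\<lambda>z. bloch_ext D T z $$ (a,b)) holomorphic_on S"
    using holomorphic_bloch_ext[OF assms(1,2)] by blast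
  define F where "F z = det (bloch_ext D T z)" for z
  have F: "F holomorphic_on S"
    unfolding F_def[abs_def] by (rule holomorphic_on_det[OF bloch_ext_carrier entries])
  have "of_real ` {-pi..pi} \<subseteq> S"
    using S(2) by (auto simp: Reals_def)
  hence "integral {-pi..pi} (\<lambda>k. deriv F (of_real k) / F (of_real k))
      = 2 * of_real pi * \<i> * winding_number (F \<circ> linepath (of_real (- pi)) (of_real pi)) 0"
    using integral_logderiv_eq_winding_number[OF S(1) F, of "- pi" pi] nonzero
    by (simp add: F_def bloch_eq_bloch_ext)
  moreover have "winding D T = integral {-pi..pi} (\<lambda>k. deriv F (of_real k) / F (of_real k)) / (2 * of_real pi * \<i>)"
    using vector_derivative_holomorphic_of_real[OF F S(1)] S(2)
    by (simp add: winding_def bloch_eq_bloch_ext F_def[symmetric] subset_iff)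
  ultimately show ?thesis
    by (simp add: F_def[abs_def])
qed

lemma winding_number_det_bloch_ext_eq_0:
  assumes "stochastic D T" "local_matrix D T" "\<And>j b. b \<in> {1..D} \<Longrightarrow> T j b j b > 1/2"
  shows "winding_number ((\<lambda>z. det (bloch_ext D T z)) \<circ> linepath (of_real (- pi)) (of_real pi)) 0 = 0"
proof -
  obtain S where "open S" and S: "\<real> \<subseteq> S"
    and entries: "\<And>a b. a < D \<Longrightarrow> b < D \<Longrightarrow> (\<lambda>z. bloch_ext D T z $$ (a,b)) holomorphic_on S"
    using holomorphic_bloch_ext[OF assms(1,2)] by blast
  let ?A = "\<lambda>s. bloch_ext D T (of_real (linepath (- pi) pi s))"
  have cont: "continuous_on {0..1} (\<lambda>s. ?A s $$ (a,b))" if "a < D" "b < D" for a b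
    by (rule continuous_on_compose2[OF holomorphic_on_imp_continuous_on[OF entries[OF that]]])
       (use S in \<open>auto intro!: continuous_intros continuous_on_linepath\<close>)
  have dom: "Re_col_diag_dominant (?A s)" for s
    using Re_col_diag_dominant_bloch_ext[OF assms(1,3)] .
  have loop: "?A 0 = ?A 1"
    using bloch_ext_periodic[of D T "- of_real pi"] by (simp add: linepath_def)
  show ?thesis
    unfolding o_def of_real_linepath[symmetric]
    by (rule winding_number_det_Re_col_diag_dominant_loop[OF bloch_ext_carrier cont dom loop])
qed

theorem mainTheorem6:
  fixes D :: nat and T :: "int \<Rightarrow> nat \<Rightarrow> int \<Rightarrow> nat \<Rightarrow> real"
  assumes "stochastic D T"
    and "local_matrix D T"
    and "translation_invariant D T"
    and "\<And>j b. b \<in> {1..D} \<Longrightarrow> T j b j b > 1/2"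
  shows "(\<forall>k \<in> {-pi..pi}. \<forall>ev. eigenvalue (bloch D T k) ev \<longrightarrow> Re ev > 0)
       \<and> (\<forall>k \<in> {-pi..pi}. Determinant.det (bloch D T k) \<noteq> 0)
       \<and> winding D T = 0"
proof -
  have carrier: "bloch D T k \<in> carrier_mat D D" for k
    by (simp add: bloch_eq_bloch_ext bloch_ext_carrier)
  have dom: "Re_col_diag_dominant (bloch D T k)" for k
    using Re_col_diag_dominant_bloch_ext[OF assms(1,4)] by (simp add: bloch_eq_bloch_ext)
  have det: "det (bloch D T k) \<noteq> 0" for k
    by (rule det_neq_0_if_Re_col_diag_dominant[OF carrier dom])
  have "winding D T = 0"
    using winding_eq_winding_number_det_bloch_ext[OF assms(1,2) det]
      winding_number_det_bloch_ext_eq_0[OF assms(1,2,4)] by simp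
  thus ?thesis
    using eigenvalue_Re_pos_if_Re_col_diag_dominant[OF carrier dom] det by blast
qed

end
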